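(* Let $S$ be a triangulated surface with set of simplices $\mathcal V=\mathcal V_0\cup\mathcal V_1\cup\mathcal V_2$, and let $V:\mathcal V_0\to\mathcal N$ be any map. Then there is a unique simplicial surface tonnetz $T$ on $S$ which is a vertex tonnetz satisfying $[T(\rho)]=\{V(\rho)\}$ for every vertex $\rho\in\mathcal V_0$ and, for every face $\sigma\in\mathcal V_2$, $T(\sigma)$ equals the multiset $\{V(\rho)\mid \rho\in\mathcal V_0,\ \rho<\sigma\}$ (the values of $V$ on the three vertices of $\sigma$, counted with multiplicity).
   Context: Let $\mathcal N=\mathbb Z/12\mathbb Z$ (pitch classes). A multiset in $\mathcal N$ is a finite collection of elements of $\mathcal N$ with (finite) multiplicities; $\operatorname{Multisets}(\mathcal N)$ denotes the set of all of them. For a multiset $\mathcal C$, $|\mathcal C|$ is its order (number of elements counted with multiplicity) and $[\mathcal C]$ its underlying set. For a set $\mathcal A$ and multiset $\mathcal C$, a bijection $\phi:\mathcal A\to\mathcal C$ means a map $\phi:\mathcal A\to[\mathcal C]$ such that for each $c\in[\mathcal C]$ the cardinality of $\phi^{-1}(c)$ equals the multiplicity of $c$ in $\mathcal C$. Let $S$ be a surface (2-dimensional topological manifold, without boundary) with a triangulation whose sets of vertices, edges and faces are $\mathcal V_0,\mathcal V_1,\mathcal V_2$; $\mathcal V=\mathcal V_0\cup\mathcal V_1\cup\mathcal V_2$ is partially ordered by inclusion ($\le$, $<$), and $\tau\prec\sigma$ means $\tau\le\sigma$ with $\tau$ of codimension 1 in $\sigma$. Every edge has two vertices and lies in exactly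 two faces. A simplicial surface tonnetz on $S$ is a map $T:\mathcal V\to\operatorname{Multisets}(\mathcal N)$ such that: (1) (downwards coherent) for each $\sigma\in\mathcal V_1\cup\mathcal V_2$ there exists a bijection $\partial_\sigma:\{\tau\mid\tau\prec\sigma\}\to T(\sigma)$ such that $\partial_\sigma(\tau)=N$ implies $N\in T(\tau)$; (2) (upwards coherent) for each $\rho\in\mathcal V_0\cup\mathcal V_1$ there exists a bijection $\Delta_\rho:\{\tau\mid\tau\succ\rho\}\to T(\rho)$ such that $\Delta_\rho(\tau)=N$ implies $N\in T(\tau)$. (The bijections are not part of the data; only their existence is required.) A tonnetz $T$ is a vertex tonnetz if $[T(\rho)]$ has cardinality one for every vertex $\rho\in\mathcal V_0$. *)

theory Defs
  imports Main "HOL-Library.Multiset" "HOL-Library.Numeral_Type"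
begin

text \<open>Pitch classes: the type 12 of HOL-Library.Numeral_Type is Z/12Z.\<close>
type_synonym pitch = "12"

text \<open>Simplices are represented by their (finite) vertex sets; vertices are
  singletons, edges 2-sets, faces 3-sets, ordered by inclusion.
  A triangulated surface (without boundary): closed under faces, each edge lies in
  exactly two faces, each vertex lies in finitely many edges, and the link of every
  vertex is a nonempty connected graph (hence, being 2-regular and finite, a circle).\<close>
definition vlink :: "'v set set \<Rightarrow> 'v set set \<Rightarrow> 'v \<Rightarrow> 'v set" where
  "vlink V1 V2 v = {u. {v, u} \<in> V1}"

definition vlink_rel :: "'v set set \<Rightarrow> 'v \<Rightarrow> ('v \<times> 'v) set" where
  "vlink_rel V2 v = {(u, w). {v, u, w} \<in> V2 \<and> card {v, u, w} = 3}"

definition triangulated_surface :: "'v set set \<Rightarrow> 'v set set \<Rightarrow> 'v set set \<Rightarrow> bool" where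
  "triangulated_surface V0 V1 V2 \<longleftrightarrow>
     (\<forall>\<rho>\<in>V0. \<exists>v. \<rho> = {v}) \<and>
     (\<forall>e\<in>V1. card e = 2 \<and> (\<forall>v\<in>e. {v} \<in> V0)) \<and>
     (\<forall>f\<in>V2. card f = 3 \<and> (\<forall>e. e \<subseteq> f \<and> card e = 2 \<longrightarrow> e \<in> V1)) \<and>
     (\<forall>e\<in>V1. card {f\<in>V2. e \<subseteq> f} = 2) \<and>
     (\<forall>v. {v} \<in> V0 \<longrightarrow>
        finite {e\<in>V1. v \<in> e} \<and> vlink V1 V2 v \<noteq> {} \<and>
        (\<forall>u\<in>vlink V1 V2 v. \<forall>w\<in>vlink V1 V2 v. (u, w) \<in> (vlink_rel V2 v)\<^sup>*))"

definition codim1 :: "'v set \<Rightarrow> 'v set \<Rightarrow> bool" where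
  "codim1 \<tau> \<sigma> \<longleftrightarrow> \<tau> \<subseteq> \<sigma> \<and> card \<sigma> = card \<tau> + 1"

definition mset_bij :: "('a \<Rightarrow> 'b) \<Rightarrow> 'a set \<Rightarrow> 'b multiset \<Rightarrow> bool" where
  "mset_bij \<phi> A C \<longleftrightarrow> \<phi> ` A \<subseteq> set_mset C \<and>
     (\<forall>c \<in># C. finite {a\<in>A. \<phi> a = c} \<and> card {a\<in>A. \<phi> a = c} = count C c)"

definition surface_tonnetz ::
  "'v set set \<Rightarrow> 'v set set \<Rightarrow> 'v set set \<Rightarrow> ('v set \<Rightarrow> pitch multiset) \<Rightarrow> bool" where
  "surface_tonnetz V0 V1 V2 T \<longleftrightarrow>
     (let V = V0 \<union> V1 \<union> V2 in
     (\<forall>\<sigma>\<in>V1 \<union> V2. \<exists>bd. mset_bij bd {\<tau>\<in>V. codim1 \<tau> \<sigma>} (T \<sigma>) \<and>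
          (\<forall>\<tau>\<in>{\<tau>\<in>V. codim1 \<tau> \<sigma>}. bd \<tau> \<in># T \<tau>)) \<and>
     (\<forall>\<rho>\<in>V0 \<union> V1. \<exists>up. mset_bij up {\<tau>\<in>V. codim1 \<rho> \<tau>} (T \<rho>) \<and>
          (\<forall>\<tau>\<in>{\<tau>\<in>V. codim1 \<rho> \<tau>}. up \<tau> \<in># T \<tau>)))"

definition vertex_tonnetz :: "'v set set \<Rightarrow> ('v set \<Rightarrow> pitch multiset) \<Rightarrow> bool" where
  "vertex_tonnetz V0 T \<longleftrightarrow> (\<forall>\<rho>\<in>V0. card (set_mset (T \<rho>)) = 1)"

end

theory Submission
  imports Defs
begin

(* Upward coherence at a vertex v maps the
   edges at v into T(v), whose only element is V(v), so T(v) is V(v) repeated once per edge;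
   downward coherence at an edge maps its endpoints into their one-valued vertex multisets, so
   T({a,b}) = {V a, V b}; the faces are prescribed. Conversely these multisets are coherent:
   a face {a,b,c} labels its edges ab, bc, ac by V a, V b, V c, and an edge {a,b} labels its
   two faces by V a and V b. *)

lemma mset_bij_iff_image_mset:
  assumes "finite A"
  shows "mset_bij \<phi> A C \<longleftrightarrow> C = image_mset \<phi> (mset_set A)"
proof -
  have count_image: "count (image_mset \<phi> (mset_set A)) c = card {a\<in>A. \<phi> a = c}" for c
    using assms by (simp add: count_image_mset' Collect_conj_eq Int_commute eq_commute)
  show ?thesis
  proof
    assume bij: "mset_bij \<phi> A C"
    show "C = image_mset \<phi> (mset_set A)"
    proof (rule multiset_eqI)
      fix c
      show "count C c = count (image_mset \<phi> (mset_set A)) c"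
      proof (cases "c \<in># C")
        case True
        then show ?thesis using bij count_image unfolding mset_bij_def by auto
      next
        case False
        then have "{a\<in>A. \<phi> a = c} = {}" using bij unfolding mset_bij_def by auto
        then show ?thesis using False count_image[of c] by (metis card.empty not_in_iff)
      qed
    qed
  next
    assume "C = image_mset \<phi> (mset_set A)"
    then show "mset_bij \<phi> A C" unfolding mset_bij_def using assms count_image by auto
  qed
qed

definition coherent_bij :: "('s \<Rightarrow> 'a multiset) \<Rightarrow> 's set \<Rightarrow> 'a multiset \<Rightarrow> bool" where
  "coherent_bij T A C \<longleftrightarrow> (\<exists>\<phi>. mset_bij \<phi> A C \<and> (\<forall>\<tau>\<in>A. \<phi> \<tau> \<in># T \<tau>))"

lemma coherent_bij_iff:
  assumes "finite A"
  shows "coherent_bij T A C \<longleftrightarrow> (\<exists>\<phi>. C = image_mset \<phi> (mset_set A) \<and> (\<forall>\<tau>\<in>A. \<phi> \<tau> \<in># T \<tau>))"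
  unfolding coherent_bij_def mset_bij_iff_image_mset[OF assms] ..

lemma coherent_bij_singleton_values:
  assumes "finite A" "coherent_bij T A C" "\<And>\<tau>. \<tau> \<in> A \<Longrightarrow> set_mset (T \<tau>) = {f \<tau>}"
  shows "C = image_mset f (mset_set A)"
proof -
  obtain \<phi> where C: "C = image_mset \<phi> (mset_set A)" and \<phi>: "\<forall>\<tau>\<in>A. \<phi> \<tau> \<in># T \<tau>"
    using assms(1,2) coherent_bij_iff by blast
  have "image_mset \<phi> (mset_set A) = image_mset f (mset_set A)"
    using assms(1,3) \<phi> by (intro image_mset_cong) auto
  then show ?thesis using C by simp
qed

lemma coherent_bij_singleton_target:
  assumes "finite A" "coherent_bij T A C" "set_mset C = {c}"
  shows "C = replicate_mset (card A) c"
proof -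
  obtain \<phi> where "C = image_mset \<phi> (mset_set A)"
    using assms(1,2) coherent_bij_iff by blast
  then have "size C = card A" by simp
  then show ?thesis using set_mset_subset_singletonD[of C c] assms(3) by simp
qed

lemma two_element_subsets_triple:
  "a \<noteq> b \<Longrightarrow> b \<noteq> c \<Longrightarrow> a \<noteq> c \<Longrightarrow>
     {e. e \<subseteq> {a, b, c} \<and> card e = 2} = {{a, b}, {b, c}, {a, c}}"
  by (auto simp: card_2_iff)

context
  fixes V0 V1 V2 :: "'v set set"
  assumes surface: "triangulated_surface V0 V1 V2"
begin

definition facets :: "'v set \<Rightarrow> 'v set set" where
  "facets \<sigma> = {\<tau>\<in>V0 \<union> V1 \<union> V2. codim1 \<tau> \<sigma>}"

definition cofacets :: "'v set \<Rightarrow> 'v set set" where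
  "cofacets \<rho> = {\<tau>\<in>V0 \<union> V1 \<union> V2. codim1 \<rho> \<tau>}"

lemma surface_tonnetz_iff_coherent_facets:
  "surface_tonnetz V0 V1 V2 T \<longleftrightarrow>
     (\<forall>\<sigma>\<in>V1 \<union> V2. coherent_bij T (facets \<sigma>) (T \<sigma>)) \<and>
     (\<forall>\<rho>\<in>V0 \<union> V1. coherent_bij T (cofacets \<rho>) (T \<rho>))"
  unfolding surface_tonnetz_def coherent_bij_def facets_def cofacets_def Let_def ..

lemma vertex_singleton: "\<rho> \<in> V0 \<Longrightarrow> \<exists>v. \<rho> = {v}"
  using surface unfolding triangulated_surface_def by (elim conjE) simp

lemma vertexE:
  assumes "\<rho> \<in> V0"
  obtains v where "\<rho> = {v}"
  using vertex_singleton[OF assms] by blast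

lemma card_edge: "e \<in> V1 \<Longrightarrow> card e = 2"
  using surface unfolding triangulated_surface_def by (elim conjE) simp

lemma card_face: "f \<in> V2 \<Longrightarrow> card f = 3"
  using surface unfolding triangulated_surface_def by (elim conjE) simp

lemma edge_vertex: "e \<in> V1 \<Longrightarrow> v \<in> e \<Longrightarrow> {v} \<in> V0"
  using surface unfolding triangulated_surface_def by (elim conjE) simp

lemma face_edge: "f \<in> V2 \<Longrightarrow> e \<subseteq> f \<Longrightarrow> card e = 2 \<Longrightarrow> e \<in> V1"
  using surface unfolding triangulated_surface_def by (elim conjE) simp

lemma card_faces_containing_edge: "e \<in> V1 \<Longrightarrow> card {f\<in>V2. e \<subseteq> f} = 2"
  using surface unfolding triangulated_surface_def by (elim conjE) simp

lemma finite_edges_containing_vertex: "{v} \<in> V0 \<Longrightarrow> finite {e\<in>V1. v \<in> e}"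
  using surface unfolding triangulated_surface_def by (elim conjE) simp

lemma edge_containing_vertex_exists: "{v} \<in> V0 \<Longrightarrow> \<exists>u. {v, u} \<in> V1"
  using surface unfolding triangulated_surface_def vlink_def by (elim conjE) simp

lemma card_vertex: "\<rho> \<in> V0 \<Longrightarrow> card \<rho> = 1"
  by (erule vertexE) simp

lemma edgeE:
  assumes "e \<in> V1"
  obtains a b where "e = {a, b}" "a \<noteq> b"
  using card_edge[OF assms] unfolding card_2_iff by blast

lemma faceE:
  assumes "f \<in> V2"
  obtains a b c where "f = {a, b, c}" "a \<noteq> b" "b \<noteq> c" "a \<noteq> c"
  using card_face[OF assms] unfolding card_3_iff by blast

lemma face_vertex:
  assumes "f \<in> V2" "v \<in> f"
  shows "{v} \<in> V0"
proof -
  obtain u where "u \<in> f" "u \<noteq> v"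
    using assms by (elim faceE) blast
  then have "{v, u} \<in> V1" using assms by (intro face_edge) auto
  then show ?thesis by (rule edge_vertex) simp
qed

lemma simplex_not_vertex: "\<sigma> \<in> V1 \<union> V2 \<Longrightarrow> \<sigma> \<notin> V0"
  using card_vertex card_edge card_face by fastforce

lemma simplex_vertex: "\<sigma> \<in> V1 \<union> V2 \<Longrightarrow> v \<in> \<sigma> \<Longrightarrow> {v} \<in> V0"
  using edge_vertex face_vertex by blast

lemma finite_simplex: "\<sigma> \<in> V0 \<union> V1 \<union> V2 \<Longrightarrow> finite \<sigma>"
  using card_vertex card_edge card_face card.infinite by fastforce

lemma vertices_below_simplex:
  assumes "\<sigma> \<in> V1 \<union> V2"
  shows "{\<rho>\<in>V0. \<rho> < \<sigma>} = (\<lambda>v. {v}) ` \<sigma>"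
proof (intro set_eqI iffI)
  fix \<rho> assume "\<rho> \<in> {\<rho>\<in>V0. \<rho> < \<sigma>}"
  then show "\<rho> \<in> (\<lambda>v. {v}) ` \<sigma>" by (auto elim!: vertexE)
next
  fix \<rho> assume "\<rho> \<in> (\<lambda>v. {v}) ` \<sigma>"
  then obtain v where v: "v \<in> \<sigma>" "\<rho> = {v}" by blast
  have "card \<sigma> \<noteq> 1" using assms card_edge card_face by auto
  then have "\<rho> \<noteq> \<sigma>" using v by auto
  then show "\<rho> \<in> {\<rho>\<in>V0. \<rho> < \<sigma>}" using v simplex_vertex[OF assms] by auto
qed

lemma facets_edge: "e \<in> V1 \<Longrightarrow> facets e = {\<rho>\<in>V0. \<rho> < e}"
  using card_vertex card_edge card_face unfolding facets_def codim1_def by fastforce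

lemma facets_face:
  assumes "{a, b, c} \<in> V2"
  shows "facets {a, b, c} = {{a, b}, {b, c}, {a, c}}"
proof -
  have "a \<noteq> b" "b \<noteq> c" "a \<noteq> c"
    using card_face[OF assms] by (auto simp: card_insert_if split: if_splits)
  moreover have "facets {a, b, c} = {e. e \<subseteq> {a, b, c} \<and> card e = 2}"
    using card_face[OF assms] face_edge[OF assms] card_edge
    unfolding facets_def codim1_def by auto
  ultimately show ?thesis by (simp add: two_element_subsets_triple)
qed

lemma cofacets_vertex: "{v} \<in> V0 \<Longrightarrow> cofacets {v} = {e\<in>V1. v \<in> e}"
  using card_vertex card_edge card_face unfolding cofacets_def codim1_def by fastforce

lemma cofacets_edge: "e \<in> V1 \<Longrightarrow> cofacets e = {f\<in>V2. e \<subseteq> f}"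
  using card_vertex card_edge card_face unfolding cofacets_def codim1_def by fastforce

lemma finite_cofacets_vertex:
  assumes "\<rho> \<in> V0"
  shows "finite (cofacets \<rho>)"
proof -
  obtain v where "\<rho> = {v}" using assms by (rule vertexE)
  with assms show ?thesis by (simp add: cofacets_vertex finite_edges_containing_vertex)
qed

lemma cofacets_vertex_nonempty:
  assumes "\<rho> \<in> V0"
  shows "cofacets \<rho> \<noteq> {}"
proof -
  obtain v where "\<rho> = {v}" using assms by (rule vertexE)
  with assms show ?thesis using cofacets_vertex edge_containing_vertex_exists by fastforce
qed

definition induced_tonnetz :: "('v set \<Rightarrow> 'a) \<Rightarrow> 'v set \<Rightarrow> 'a multiset" where
  "induced_tonnetz V \<sigma> =
     (if \<sigma> \<in> V0 then replicate_mset (card (cofacets \<sigma>)) (V \<sigma>)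
      else image_mset V (mset_set {\<rho>\<in>V0. \<rho> < \<sigma>}))"

lemma induced_tonnetz_vertex:
  "\<rho> \<in> V0 \<Longrightarrow> induced_tonnetz V \<rho> = replicate_mset (card (cofacets \<rho>)) (V \<rho>)"
  unfolding induced_tonnetz_def by simp

lemma induced_tonnetz_not_vertex:
  "\<sigma> \<in> V1 \<union> V2 \<Longrightarrow> induced_tonnetz V \<sigma> = image_mset V (mset_set {\<rho>\<in>V0. \<rho> < \<sigma>})"
  using simplex_not_vertex unfolding induced_tonnetz_def by simp

lemma set_mset_induced_tonnetz_vertex:
  assumes "\<rho> \<in> V0"
  shows "set_mset (induced_tonnetz V \<rho>) = {V \<rho>}"
proof -
  have "card (cofacets \<rho>) \<noteq> 0"
    using finite_cofacets_vertex[OF assms] cofacets_vertex_nonempty[OF assms] by simp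
  then show ?thesis using assms by (simp add: induced_tonnetz_vertex)
qed

lemma induced_tonnetz_simplex:
  assumes "\<sigma> \<in> V1 \<union> V2"
  shows "induced_tonnetz V \<sigma> = image_mset (\<lambda>v. V {v}) (mset_set \<sigma>)"
proof -
  have "mset_set {\<rho>\<in>V0. \<rho> < \<sigma>} = image_mset (\<lambda>v. {v}) (mset_set \<sigma>)"
    unfolding vertices_below_simplex[OF assms] by (simp add: image_mset_mset_set inj_on_def)
  then show ?thesis
    using induced_tonnetz_not_vertex[OF assms] by (simp add: multiset.map_comp comp_def)
qed

lemma vertex_value_mem_induced_tonnetz:
  "\<sigma> \<in> V1 \<union> V2 \<Longrightarrow> v \<in> \<sigma> \<Longrightarrow> V {v} \<in># induced_tonnetz V \<sigma>"
  by (simp add: induced_tonnetz_simplex finite_simplex)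

lemma finite_facets_edge: "e \<in> V1 \<Longrightarrow> finite (facets e)"
  using finite_simplex by (simp add: facets_edge vertices_below_simplex)

lemma induced_tonnetz_edge:
  "e \<in> V1 \<Longrightarrow> induced_tonnetz V e = image_mset V (mset_set (facets e))"
  by (simp add: facets_edge induced_tonnetz_not_vertex)

lemma coherent_facets_edge:
  assumes "e \<in> V1"
  shows "coherent_bij (induced_tonnetz V) (facets e) (induced_tonnetz V e)"
proof -
  have "V \<rho> \<in># induced_tonnetz V \<rho>" if "\<rho> \<in> facets e" for \<rho>
    using that set_mset_induced_tonnetz_vertex[of \<rho> V] unfolding facets_edge[OF assms] by simp
  then show ?thesis
    using coherent_bij_iff finite_facets_edge[OF assms] induced_tonnetz_edge[OF assms] by blast
qed

lemma coherent_facets_face: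
  assumes "f \<in> V2"
  shows "coherent_bij (induced_tonnetz V) (facets f) (induced_tonnetz V f)"
proof -
  obtain a b c where f: "f = {a, b, c}" and abc: "a \<noteq> b" "b \<noteq> c" "a \<noteq> c"
    using assms by (rule faceE)
  have edges: "{a, b} \<in> V1" "{b, c} \<in> V1" "{a, c} \<in> V1"
    using face_edge[OF assms, of "{a, b}"] face_edge[OF assms, of "{b, c}"]
      face_edge[OF assms, of "{a, c}"] f abc by auto
  have edges_distinct: "{a, b} \<noteq> {b, c}" "{a, b} \<noteq> {a, c}" "{b, c} \<noteq> {a, c}"
    using abc by (auto simp: doubleton_eq_iff)
  define \<phi> where "\<phi> e = (if e = {a, b} then V {a} else if e = {b, c} then V {b} else V {c})" for e
  have facets: "facets f = {{a, b}, {b, c}, {a, c}}"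
    using facets_face assms f by simp
  have "induced_tonnetz V f = {#V {a}, V {b}, V {c}#}"
    using induced_tonnetz_simplex[of f V] assms f abc by simp
  also have "\<dots> = image_mset \<phi> (mset_set (facets f))"
    using edges_distinct by (simp add: facets \<phi>_def add_mset_commute)
  finally have "induced_tonnetz V f = image_mset \<phi> (mset_set (facets f))" .
  moreover have "\<forall>e\<in>facets f. \<phi> e \<in># induced_tonnetz V e"
    using edges edges_distinct
    by (auto simp: facets \<phi>_def intro: vertex_value_mem_induced_tonnetz)
  moreover have "finite (facets f)" unfolding facets by simp
  ultimately show ?thesis using coherent_bij_iff by blast
qed

lemma coherent_cofacets_vertex:
  assumes "\<rho> \<in> V0"
  shows "coherent_bij (induced_tonnetz V) (cofacets \<rho>) (induced_tonnetz V \<rho>)"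
proof -
  obtain v where v: "\<rho> = {v}" using assms by (rule vertexE)
  have "induced_tonnetz V \<rho> = image_mset (\<lambda>_. V \<rho>) (mset_set (cofacets \<rho>))"
    using finite_cofacets_vertex[OF assms]
    by (simp add: induced_tonnetz_vertex[OF assms] image_mset_const_eq)
  moreover have "\<forall>e\<in>cofacets \<rho>. V \<rho> \<in># induced_tonnetz V e"
    using cofacets_vertex[of v] assms vertex_value_mem_induced_tonnetz[of _ v V] unfolding v by auto
  ultimately show ?thesis using coherent_bij_iff finite_cofacets_vertex[OF assms] by blast
qed

lemma coherent_cofacets_edge:
  assumes "e \<in> V1"
  shows "coherent_bij (induced_tonnetz V) (cofacets e) (induced_tonnetz V e)"
proof -
  obtain a b where e: "e = {a, b}" "a \<noteq> b" using assms by (rule edgeE)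
  obtain f1 f2 where cofacets: "cofacets e = {f1, f2}" and "f1 \<noteq> f2"
    using card_faces_containing_edge[OF assms] cofacets_edge[OF assms] card_2_iff by metis
  have faces: "f1 \<in> V2" "e \<subseteq> f1" "f2 \<in> V2" "e \<subseteq> f2"
    using cofacets cofacets_edge[OF assms] by blast+
  define \<phi> where "\<phi> f = (if f = f1 then V {a} else V {b})" for f
  have "induced_tonnetz V e = {#V {a}, V {b}#}"
    using induced_tonnetz_simplex[of e V] assms e by simp
  also have "\<dots> = image_mset \<phi> (mset_set (cofacets e))"
    using \<open>f1 \<noteq> f2\<close> by (simp add: cofacets \<phi>_def)
  finally have "induced_tonnetz V e = image_mset \<phi> (mset_set (cofacets e))" .
  moreover have "\<forall>f\<in>cofacets e. \<phi> f \<in># induced_tonnetz V f"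
    using vertex_value_mem_induced_tonnetz faces e unfolding cofacets \<phi>_def by auto
  moreover have "finite (cofacets e)" unfolding cofacets by simp
  ultimately show ?thesis using coherent_bij_iff by blast
qed

lemma surface_tonnetz_induced_tonnetz: "surface_tonnetz V0 V1 V2 (induced_tonnetz V)"
  unfolding surface_tonnetz_iff_coherent_facets
  using coherent_facets_edge coherent_facets_face coherent_cofacets_vertex coherent_cofacets_edge
  by blast

lemma surface_tonnetz_eq_induced_tonnetz:
  assumes "surface_tonnetz V0 V1 V2 T"
    and vertices: "\<forall>\<rho>\<in>V0. set_mset (T \<rho>) = {V \<rho>}"
    and faces: "\<forall>\<sigma>\<in>V2. T \<sigma> = image_mset V (mset_set {\<rho>\<in>V0. \<rho> < \<sigma>})"
    and "\<sigma> \<in> V0 \<union> V1 \<union> V2"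
  shows "T \<sigma> = induced_tonnetz V \<sigma>"
proof -
  have coherent_facets: "coherent_bij T (facets e) (T e)" if "e \<in> V1" for e
    using assms(1) that unfolding surface_tonnetz_iff_coherent_facets by blast
  have coherent_cofacets: "coherent_bij T (cofacets \<rho>) (T \<rho>)" if "\<rho> \<in> V0" for \<rho>
    using assms(1) that unfolding surface_tonnetz_iff_coherent_facets by blast
  consider "\<sigma> \<in> V0" | "\<sigma> \<in> V1" | "\<sigma> \<in> V2" using assms(4) by blast
  then show ?thesis
  proof cases
    case 1
    then show ?thesis
      using coherent_bij_singleton_target[OF finite_cofacets_vertex coherent_cofacets] vertices
      by (simp add: induced_tonnetz_vertex)
  next
    case 2
    have "\<forall>\<rho>\<in>facets \<sigma>. set_mset (T \<rho>) = {V \<rho>}"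
      using vertices facets_edge[OF 2] by simp
    then show ?thesis
      using coherent_bij_singleton_values[OF finite_facets_edge coherent_facets] 2
      by (simp add: induced_tonnetz_edge)
  next
    case 3
    then show ?thesis using faces by (simp add: induced_tonnetz_not_vertex)
  qed
qed

end

theorem mainTheorem2:
  fixes V0 V1 V2 :: "'v set set" and V :: "'v set \<Rightarrow> pitch"
  assumes "triangulated_surface V0 V1 V2"
  shows "\<exists>T. (surface_tonnetz V0 V1 V2 T \<and> vertex_tonnetz V0 T \<and>
              (\<forall>\<rho>\<in>V0. set_mset (T \<rho>) = {V \<rho>}) \<and>
              (\<forall>\<sigma>\<in>V2. T \<sigma> = image_mset V (mset_set {\<rho>\<in>V0. \<rho> < \<sigma>}))) \<and>
           (\<forall>T'. surface_tonnetz V0 V1 V2 T' \<and> vertex_tonnetz V0 T' \<and>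
              (\<forall>\<rho>\<in>V0. set_mset (T' \<rho>) = {V \<rho>}) \<and>
              (\<forall>\<sigma>\<in>V2. T' \<sigma> = image_mset V (mset_set {\<rho>\<in>V0. \<rho> < \<sigma>}))
              \<longrightarrow> (\<forall>\<sigma>\<in>V0 \<union> V1 \<union> V2. T' \<sigma> = T \<sigma>))"
proof (intro exI conjI allI impI ballI)
  let ?T = "induced_tonnetz V0 V1 V2 V"
  show "surface_tonnetz V0 V1 V2 ?T"
    using assms by (rule surface_tonnetz_induced_tonnetz)
  show vertices: "set_mset (?T \<rho>) = {V \<rho>}" if "\<rho> \<in> V0" for \<rho>
    using assms that by (rule set_mset_induced_tonnetz_vertex)
  then show "vertex_tonnetz V0 ?T"
    unfolding vertex_tonnetz_def by simp
  show "?T \<sigma> = image_mset V (mset_set {\<rho>\<in>V0. \<rho> < \<sigma>})" if "\<sigma> \<in> V2" for \<sigma>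
    using assms that by (simp add: induced_tonnetz_not_vertex)
  fix T' \<sigma>
  assume "surface_tonnetz V0 V1 V2 T' \<and> vertex_tonnetz V0 T' \<and>
    (\<forall>\<rho>\<in>V0. set_mset (T' \<rho>) = {V \<rho>}) \<and>
    (\<forall>\<sigma>\<in>V2. T' \<sigma> = image_mset V (mset_set {\<rho>\<in>V0. \<rho> < \<sigma>}))"
    and "\<sigma> \<in> V0 \<union> V1 \<union> V2"
  then show "T' \<sigma> = ?T \<sigma>"
    using surface_tonnetz_eq_induced_tonnetz[OF assms] by blast
qed

end
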